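(* Let ${\mathcal O}$ be a non-even nilpotent orbit with Jordan type ${\bf d}=[d_1,\dots,d_k]$ in a classical simple Lie algebra, and let $\Theta_1$ be the set of simple roots of weight $1$ in its weighted Dynkin diagram. If ${\mathcal O}$ is in one of the cases (i) $\mathfrak{sl}_n$; (ii) $\mathfrak{so}_{2n+1}$ (resp. $\mathfrak{sp}_{2n}$) with an odd (resp. even) $q\ge0$ such that $d_1,\dots,d_q$ are odd and $d_{q+1},\dots,d_k$ even; (iii-a) $\mathfrak{so}_{2n}$ with an even $q\ge4$ such that $d_1,\dots,d_q$ are odd and the rest even — then $|\Theta_1|$ is even. If ${\mathcal O}\subset\mathfrak{so}_{2n}$ has exactly two odd parts, at positions $2t-1,2t$ ($t\ge1$), then: if $t=1$, $\alpha_n\in\Theta_1$ and $|\Theta_1|$ is odd; if $k=2t\ge4$, $|\Theta_1|$ is even and $\alpha_{n-1},\alpha_n\in\Theta_1$; if $k>2t\ge4$, $|\Theta_1|$ is even.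
   Context: Parts satisfy $d_1\ge\dots\ge d_k$. Weighted Dynkin diagram: for an $\mathfrak{sl}_2$-triple $(x,y,h)$, $x\in{\mathcal O}$, $h$ in a fixed Cartan subalgebra and dominant, the simple root $\alpha$ gets weight $\alpha(h)\in\{0,1,2\}$; ${\mathcal O}$ is even if no weight equals $1$. Simple roots labelled as in Bourbaki ($\alpha_{n-1},\alpha_n$ the fork nodes in type $D_n$). *)

theory Defs
  imports Main
begin

text \<open>Nilpotent orbits in the classical simple Lie algebras are parametrised by
their Jordan types (partitions).  The weighted Dynkin diagram of the orbit is
computed from the partition by the standard recipe (Collingwood--McGovern):
the neutral element h of an sl2-triple acts with eigenvalues
d-1, d-3, ..., 1-d on each Jordan block of size d; listing all eigenvalues
in non-increasing order as h_1 >= h_2 >= ..., the dominant h has these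
coordinates and the simple root weights are read off in Bourbaki labelling.\<close>

datatype ctype = TA | TB | TC | TD
  \<comment> \<open>TA: sl_N, TB: so_(2n+1), TC: sp_(2n), TD: so_(2n)\<close>

definition hvals :: "nat list \<Rightarrow> int list" where
  "hvals d = rev (sort (concat (map (\<lambda>m. map (\<lambda>j. int m - 1 - 2 * int j) [0..<m]) d)))"

definition hc :: "nat list \<Rightarrow> nat \<Rightarrow> int" where
  "hc d i = hvals d ! (i - 1)"   \<comment> \<open>1-indexed coordinate h_i\<close>

definition rank :: "ctype \<Rightarrow> nat list \<Rightarrow> nat" where
  "rank T d = (case T of
      TA \<Rightarrow> sum_list d - 1
    | TB \<Rightarrow> (sum_list d - 1) div 2
    | TC \<Rightarrow> sum_list d div 2
    | TD \<Rightarrow> sum_list d div 2)"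

text \<open>Weight of the simple root alpha_i, 1 <= i <= rank.\<close>
definition wt :: "ctype \<Rightarrow> nat list \<Rightarrow> nat \<Rightarrow> int" where
  "wt T d i = (if T = TA \<or> i < rank T d then hc d i - hc d (i + 1)
     else (case T of
        TA \<Rightarrow> 0
      | TB \<Rightarrow> hc d i
      | TC \<Rightarrow> 2 * hc d i
      | TD \<Rightarrow> hc d (i - 1) + hc d i))"

definition Theta1 :: "ctype \<Rightarrow> nat list \<Rightarrow> nat set" where
  "Theta1 T d = {i \<in> {1..rank T d}. wt T d i = 1}"

definition non_even :: "ctype \<Rightarrow> nat list \<Rightarrow> bool" where
  "non_even T d = (\<exists>i \<in> {1..rank T d}. wt T d i = 1)"

definition valid_jordan_type :: "ctype \<Rightarrow> nat list \<Rightarrow> bool" where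
  "valid_jordan_type T d = (sorted_wrt (\<ge>) d \<and> (\<forall>x \<in> set d. x > 0) \<and>
     (case T of
        TA \<Rightarrow> sum_list d \<ge> 2
      | TB \<Rightarrow> odd (sum_list d) \<and> sum_list d \<ge> 3 \<and>
              (\<forall>m. even m \<longrightarrow> even (count_list d m))
      | TC \<Rightarrow> even (sum_list d) \<and> sum_list d \<ge> 2 \<and>
              (\<forall>m. odd m \<longrightarrow> even (count_list d m))
      | TD \<Rightarrow> even (sum_list d) \<and> sum_list d \<ge> 6 \<and>
              (\<forall>m. even m \<longrightarrow> even (count_list d m))))"

definition parity_split :: "nat list \<Rightarrow> nat \<Rightarrow> bool" where
  "parity_split d q = (q \<le> length d \<and> (\<forall>i < q. odd (d ! i)) \<and>
     (\<forall>i. q \<le> i \<and> i < length d \<longrightarrow> even (d ! i)))"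

end

(*
  List the eigenvalues of h in non-increasing order as h_1 >= h_2 >= ...  Away from the end
  of the diagram the weight of alpha_i is h_i - h_(i+1), so the simple roots of weight 1
  correspond to the values v such that both v and v + 1 are eigenvalues.  The eigenvalues
  are the integers v with |v| < m and v + m odd for some part m; this set is symmetric under
  v |-> -v, so such v come in pairs v, -v - 1, and the nonnegative ones form the interval
  [0, min a b), where a and b are the largest odd and even parts (0 if there is none).
  Hence |Theta_1| is 2 min a b in type A and min a b in types B and C; in type D one adds 1
  exactly when alpha_n has weight h_(n-1) + h_n = 1, i.e. when there are exactly two odd
  parts (two zero eigenvalues) and some even part.  If the odd parts come first, min a b is
  the even number b unless a = 0; if the only odd parts are d_(2t-1) >= d_(2t) with t >= 2,
  then d_1 is even and min a b = d_(2t-1) is odd.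
*)
theory Submission
  imports Defs "HOL-Library.Multiset"
begin

section \<open>Unit descents of sorted integer lists\<close>

lemma sorted_wrt_ge_nth_le:
  fixes xs :: "'a::order list"
  assumes "sorted_wrt (\<ge>) xs" "i \<le> j" "j < length xs"
  shows "xs ! j \<le> xs ! i"
  using assms sorted_wrt_nth_less[OF assms(1), of i j] by (cases "i = j") auto

definition unit_descents :: "int list \<Rightarrow> nat set" where
  "unit_descents xs = {i. Suc i < length xs \<and> xs ! i - xs ! Suc i = 1}"

definition unit_steps :: "int set \<Rightarrow> int set" where
  "unit_steps S = {v \<in> S. v + 1 \<in> S}"

lemma finite_unit_descents: "finite (unit_descents xs)"
  by (rule finite_subset[of _ "{..<length xs}"]) (auto simp: unit_descents_def)

lemma inj_on_unit_descents:
  assumes srt: "sorted_wrt (\<ge>) xs"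
  shows "inj_on (\<lambda>i. xs ! Suc i) (unit_descents xs)"
proof -
  have less: "xs ! Suc j < xs ! Suc i"
    if "i \<in> unit_descents xs" "j \<in> unit_descents xs" "i < j" for i j
  proof -
    have "xs ! j \<le> xs ! Suc i"
      using sorted_wrt_ge_nth_le[OF srt, of "Suc i" j] that by (auto simp: unit_descents_def)
    then show ?thesis using that by (auto simp: unit_descents_def)
  qed
  show ?thesis
    by (rule inj_onI) (metis less less_irrefl linorder_neqE_nat)
qed

lemma unit_step_in_image_unit_descents:
  assumes srt: "sorted_wrt (\<ge>) xs" and v: "v \<in> unit_steps (set xs)"
  shows "\<exists>i \<in> unit_descents xs. xs ! Suc i = v"
proof -
  from v obtain p p' where p: "p < length xs" "xs ! p = v"
    and p': "p' < length xs" "xs ! p' = v + 1"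
    by (auto simp: unit_steps_def in_set_conv_nth)
  define k where "k = (LEAST k. xs ! k \<le> v)"
  have "xs ! k \<le> v" "k \<le> p"
    unfolding k_def using p by (auto intro: LeastI Least_le)
  then have xk: "xs ! k = v" and kl: "k < length xs"
    using sorted_wrt_ge_nth_le[OF srt _ p(1)] p by (auto intro: antisym)
  have "p' < k"
    using sorted_wrt_ge_nth_le[OF srt _ p'(1), of k] xk p' by (cases "p' < k") auto
  then obtain i where i: "k = Suc i" "p' \<le> i" by (cases k) auto
  have "\<not> xs ! i \<le> v"
    using not_less_Least[of i "\<lambda>k. xs ! k \<le> v"] i(1) k_def by auto
  moreover have "xs ! i \<le> xs ! p'"
    using sorted_wrt_ge_nth_le[OF srt i(2)] i kl by auto
  ultimately have "i \<in> unit_descents xs"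
    using xk i(1) kl p' by (auto simp: unit_descents_def)
  then show ?thesis using xk i(1) by auto
qed

lemma card_unit_descents_conv_unit_steps:
  assumes srt: "sorted_wrt (\<ge>) xs"
  shows "card {i \<in> unit_descents xs. P (xs ! Suc i)} = card {v \<in> unit_steps (set xs). P v}"
proof -
  have "(\<lambda>i. xs ! Suc i) ` {i \<in> unit_descents xs. P (xs ! Suc i)} = {v \<in> unit_steps (set xs). P v}"
  proof (intro equalityI subsetI)
    fix v assume "v \<in> {v \<in> unit_steps (set xs). P v}"
    then show "v \<in> (\<lambda>i. xs ! Suc i) ` {i \<in> unit_descents xs. P (xs ! Suc i)}"
      using unit_step_in_image_unit_descents[OF srt] by blast
  next
    fix v assume "v \<in> (\<lambda>i. xs ! Suc i) ` {i \<in> unit_descents xs. P (xs ! Suc i)}"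
    then obtain i where "Suc i < length xs" "xs ! i = v + 1" "xs ! Suc i = v" "P v"
      by (auto simp: unit_descents_def)
    then show "v \<in> {v \<in> unit_steps (set xs). P v}"
      by (metis (mono_tags, lifting) Suc_lessD mem_Collect_eq nth_mem unit_steps_def)
  qed
  moreover have "inj_on (\<lambda>i. xs ! Suc i) {i \<in> unit_descents xs. P (xs ! Suc i)}"
    using inj_on_unit_descents[OF srt] by (rule inj_on_subset) auto
  ultimately show ?thesis by (metis card_image)
qed

lemma card_unit_steps_symmetric:
  fixes S :: "int set"
  assumes "finite S" and sym: "\<And>x. - x \<in> S \<longleftrightarrow> x \<in> S"
  shows "card (unit_steps S) = 2 * card {v \<in> unit_steps S. 0 \<le> v}"
proof -
  let ?P = "{v \<in> unit_steps S. 0 \<le> v}"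
  have reflect: "- v - 1 \<in> unit_steps S" if "v \<in> unit_steps S" for v
    using that sym[of v] sym[of "v + 1"] by (auto simp: unit_steps_def)
  have "{v \<in> unit_steps S. v < 0} = (\<lambda>v. - v - 1) ` ?P"
  proof (intro equalityI subsetI)
    fix v assume "v \<in> {v \<in> unit_steps S. v < 0}"
    then show "v \<in> (\<lambda>v. - v - 1) ` ?P"
      using reflect[of v] by (auto intro!: image_eqI[of v _ "- v - 1"])
  qed (auto intro: reflect)
  then have "card {v \<in> unit_steps S. v < 0} = card ?P"
    by (simp add: card_image inj_on_def)
  moreover have "card (unit_steps S) = card (?P \<union> {v \<in> unit_steps S. v < 0})"
    by (rule arg_cong[where f = card]) auto
  moreover have "card (?P \<union> {v \<in> unit_steps S. v < 0}) = card ?P + card {v \<in> unit_steps S. v < 0}"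
    by (rule card_Un_disjoint) (use assms(1) in \<open>auto simp: unit_steps_def\<close>)
  ultimately show ?thesis by simp
qed

section \<open>Sorted lists symmetric under negation\<close>

lemma nth_antisymmetric_list:
  fixes xs :: "int list"
  assumes "map uminus xs = rev xs" "j < length xs"
  shows "xs ! (length xs - 1 - j) = - xs ! j"
  using arg_cong[OF assms(1), of "\<lambda>ys. ys ! j"] assms(2) by (simp add: rev_nth)

lemma upper_half_unit_descent_iff:
  fixes xs :: "int list"
  assumes srt: "sorted_wrt (\<ge>) xs" and asym: "map uminus xs = rev xs"
    and j: "j \<in> unit_descents xs"
  shows "Suc j \<le> (length xs - 1) div 2 \<longleftrightarrow> 0 \<le> xs ! Suc j"
proof -
  define m where "m = (length xs - 1) div 2"
  define m' where "m' = length xs - 1 - m"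
  have j': "Suc j < length xs" "xs ! j = xs ! Suc j + 1" using j by (auto simp: unit_descents_def)
  have mm': "m \<le> m'" "m' \<le> Suc m" "m' < length xs" using j' by (auto simp: m_def m'_def)
  have "xs ! m' = - xs ! m" unfolding m'_def by (rule nth_antisymmetric_list[OF asym]) (use mm' in auto)
  moreover have "xs ! m' \<le> xs ! m" by (rule sorted_wrt_ge_nth_le[OF srt mm'(1,3)])
  ultimately have mid: "xs ! m' \<le> 0" "0 \<le> xs ! m" by auto
  show ?thesis
  proof
    assume "Suc j \<le> (length xs - 1) div 2"
    then show "0 \<le> xs ! Suc j"
      using sorted_wrt_ge_nth_le[OF srt, of "Suc j" m] mid mm' by (auto simp: m_def)
  next
    assume pos: "0 \<le> xs ! Suc j"
    show "Suc j \<le> (length xs - 1) div 2"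
    proof (rule ccontr)
      assume "\<not> ?thesis"
      then have "m \<le> j" "m' \<le> Suc j" using mm' by (auto simp: m_def)
      then have "xs ! j \<le> xs ! m" "xs ! Suc j \<le> xs ! m'"
        using sorted_wrt_ge_nth_le[OF srt _ Suc_lessD[OF j'(1)]] sorted_wrt_ge_nth_le[OF srt _ j'(1)]
        by blast+
      then show False using pos mid \<open>xs ! m' = - xs ! m\<close> j' by linarith
    qed
  qed
qed

lemma count_list_conv_card: "count_list xs x = card {j. j < length xs \<and> xs ! j = x}"
  by (simp add: count_list_eq_length_filter length_filter_conv_card eq_commute)

lemma antisymmetric_list_middle:
  fixes xs :: "int list"
  assumes srt: "sorted_wrt (\<ge>) xs" and asym: "map uminus xs = rev xs"
    and len: "length xs = 2 * n" and "1 \<le> n"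
  shows "0 \<le> xs ! (n - 1)" "xs ! n = - xs ! (n - 1)"
proof -
  have "xs ! (length xs - 1 - (n - 1)) = - xs ! (n - 1)"
    by (rule nth_antisymmetric_list[OF asym]) (use assms in auto)
  then show mid: "xs ! n = - xs ! (n - 1)" using assms by (simp add: Suc_diff_le)
  have "xs ! n \<le> xs ! (n - 1)" by (rule sorted_wrt_ge_nth_le[OF srt]) (use assms in auto)
  then show "0 \<le> xs ! (n - 1)" using mid by simp
qed

lemma antisymmetric_list_middle_1_0_iff:
  fixes xs :: "int list"
  assumes srt: "sorted_wrt (\<ge>) xs" and asym: "map uminus xs = rev xs"
    and len: "length xs = 2 * n" and n: "2 \<le> n"
  shows "xs ! (n - 2) = 1 \<and> xs ! (n - 1) = 0 \<longleftrightarrow> count_list xs 0 = 2 \<and> 1 \<in> set xs"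
proof -
  let ?Z = "{j. j < length xs \<and> xs ! j = 0}"
  have le: "xs ! j \<le> xs ! i" if "i \<le> j" "j < 2 * n" for i j
    using sorted_wrt_ge_nth_le[OF srt that(1)] that(2) len by simp
  have "1 \<le> n" using n by simp
  note mid = antisymmetric_list_middle[OF srt asym len this]
  have bounds: "n - 2 < 2 * n" "n - 1 < 2 * n" "n < 2 * n" "n + 1 < 2 * n" using n by auto
  have mid2: "xs ! (n + 1) = - xs ! (n - 2)"
    using nth_antisymmetric_list[OF asym, of "n - 2"] len n by (simp add: numeral_2_eq_2)
  show ?thesis
  proof
    assume a: "xs ! (n - 2) = 1 \<and> xs ! (n - 1) = 0"
    have "?Z = {n - 1, n}"
    proof (intro equalityI subsetI)
      fix j assume j: "j \<in> ?Z"
      have "\<not> j \<le> n - 2" using le[of j "n - 2"] j a bounds by auto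
      moreover have "\<not> n + 1 \<le> j" using le[of "n + 1" j] j a mid2 len by auto
      ultimately show "j \<in> {n - 1, n}" by auto
    qed (use a mid len n in auto)
    then have "count_list xs 0 = 2" using n by (simp add: count_list_conv_card)
    moreover have "1 \<in> set xs"
      using a nth_mem[of "n - 2" xs] len bounds by simp
    ultimately show "count_list xs 0 = 2 \<and> 1 \<in> set xs" by simp
  next
    assume a: "count_list xs 0 = 2 \<and> 1 \<in> set xs"
    then have Z: "card ?Z = 2" by (simp add: count_list_conv_card)
    have z: "xs ! (n - 1) = 0"
    proof (rule ccontr)
      assume "xs ! (n - 1) \<noteq> 0"
      then have pos: "0 < xs ! (n - 1)" using mid(1) by simp
      have "?Z = {}"
      proof (intro equalityI subsetI)
        fix j assume j: "j \<in> ?Z"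
        show "j \<in> {}"
        proof (cases "j \<le> n - 1")
          case True
          then show ?thesis using le[of j "n - 1"] pos j bounds by simp
        next
          case False
          then have "n \<le> j" using n by simp
          then show ?thesis using le[of n j] pos mid(2) j len by simp
        qed
      qed simp
      then show False using Z by (metis card.empty zero_neq_numeral)
    qed
    have "xs ! (n - 2) \<noteq> 0"
    proof
      assume "xs ! (n - 2) = 0"
      then have "{n - 2, n - 1, n} \<subseteq> ?Z" using z mid len n by auto
      then have "card {n - 2, n - 1, n} \<le> 2" using Z card_mono[of ?Z] by simp
      then show False using n by (auto simp: card_insert_if split: if_splits)
    qed
    moreover have "0 \<le> xs ! (n - 2)" using le[of "n - 2" "n - 1"] z n by simp
    moreover obtain p where p: "p < 2 * n" "xs ! p = 1" using a len by (auto simp: in_set_conv_nth)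
    have "p \<le> n - 2"
    proof (rule ccontr)
      assume "\<not> p \<le> n - 2"
      then have "n - 1 \<le> p" by linarith
      then show False using le[of "n - 1" p] p z by simp
    qed
    then have "xs ! (n - 2) \<le> 1" using le[of p "n - 2"] p n by simp
    ultimately show "xs ! (n - 2) = 1 \<and> xs ! (n - 1) = 0" using z by simp
  qed
qed

section \<open>Eigenvalues of the neutral element\<close>

definition block_hvals :: "nat \<Rightarrow> int list" where
  "block_hvals m = map (\<lambda>j. int m - 1 - 2 * int j) [0..<m]"

lemma hvals_eq: "hvals d = rev (sort (concat (map block_hvals d)))"
  by (simp add: hvals_def block_hvals_def[abs_def])

lemma length_hvals: "length (hvals d) = sum_list d"
proof -
  have "length (concat (map block_hvals d)) = sum_list d"
    by (induction d) (simp_all add: block_hvals_def)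
  then show ?thesis by (simp add: hvals_eq)
qed

lemma sorted_hvals: "sorted_wrt (\<ge>) (hvals d)"
  by (simp add: hvals_eq sorted_wrt_rev)

lemma set_block_hvals: "v \<in> set (block_hvals m) \<longleftrightarrow> \<bar>v\<bar> < int m \<and> odd (v + int m)"
proof
  assume "v \<in> set (block_hvals m)"
  then obtain j where "j < m" "v = int m - 1 - 2 * int j" by (auto simp: block_hvals_def)
  then show "\<bar>v\<bar> < int m \<and> odd (v + int m)" by presburger
next
  assume v: "\<bar>v\<bar> < int m \<and> odd (v + int m)"
  then have "even (int m - 1 - v)" by presburger
  then obtain j where j: "int m - 1 - v = 2 * j" by (rule evenE)
  then have "nat j \<in> {0..<m}" "v = int m - 1 - 2 * int (nat j)" using v by auto
  then show "v \<in> set (block_hvals m)" unfolding block_hvals_def set_map by (intro image_eqI) simp_all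
qed

lemma set_hvals: "v \<in> set (hvals d) \<longleftrightarrow> (\<exists>m \<in> set d. \<bar>v\<bar> < int m \<and> odd (v + int m))"
  by (auto simp: hvals_eq set_block_hvals)

lemma uminus_mem_hvals_iff: "- v \<in> set (hvals d) \<longleftrightarrow> v \<in> set (hvals d)"
proof -
  have "odd (- v + int m) \<longleftrightarrow> odd (v + int m)" for m by presburger
  then show ?thesis by (simp add: set_hvals)
qed

lemma map_uminus_block_hvals: "map uminus (block_hvals m) = rev (block_hvals m)"
proof (rule nth_equalityI)
  fix i assume "i < length (map uminus (block_hvals m))"
  then have "i < m" by (simp add: block_hvals_def)
  then show "map uminus (block_hvals m) ! i = rev (block_hvals m) ! i"
    by (simp add: block_hvals_def rev_nth of_nat_diff)
qed (simp add: block_hvals_def)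

lemma map_uminus_hvals: "map uminus (hvals d) = rev (hvals d)"
proof -
  let ?c = "concat (map block_hvals d)"
  have "mset (map uminus ?c) = mset ?c"
    by (induction d) (simp_all flip: mset_map add: map_uminus_block_hvals)
  moreover have "sorted (rev (map uminus (sort ?c)))"
    by (simp add: sorted_wrt_rev sorted_wrt_map sorted_wrt_mono_rel[OF _ sorted_sort])
  ultimately have "sort ?c = rev (map uminus (sort ?c))"
    by (intro properties_for_sort) (simp_all add: mset_map)
  then show ?thesis by (simp add: hvals_eq rev_map)
qed

lemma count_list_block_hvals_0: "count_list (block_hvals m) 0 = (if odd m then 1 else 0)"
proof -
  have "distinct (block_hvals m)" by (auto simp: block_hvals_def distinct_map inj_on_def)
  moreover have "0 \<in> set (block_hvals m) \<longleftrightarrow> odd m" by (auto simp: set_block_hvals intro: odd_pos)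
  ultimately show ?thesis by (metis count_mset distinct_count_atmost_1)
qed

lemma count_list_hvals_0: "count_list (hvals d) 0 = length (filter odd d)"
proof -
  have "count_list (hvals d) 0 = count_list (concat (map block_hvals d)) 0"
    by (simp add: hvals_eq flip: count_mset)
  also have "\<dots> = length (filter odd d)"
    by (induction d) (simp_all add: count_list_block_hvals_0)
  finally show ?thesis .
qed

definition largest_part :: "(nat \<Rightarrow> bool) \<Rightarrow> nat list \<Rightarrow> nat" where
  "largest_part P d = Max (insert 0 {m \<in> set d. P m})"

lemma le_largest_part: "m \<in> set d \<Longrightarrow> P m \<Longrightarrow> m \<le> largest_part P d"
  by (simp add: largest_part_def)

lemma largest_part_le: "(\<And>m. m \<in> set d \<Longrightarrow> P m \<Longrightarrow> m \<le> b) \<Longrightarrow> largest_part P d \<le> b"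
  by (auto simp: largest_part_def)

lemma largest_part_cases: "largest_part P d = 0 \<or> largest_part P d \<in> set d \<and> P (largest_part P d)"
proof -
  have "Max (insert 0 {m \<in> set d. P m}) \<in> insert 0 {m \<in> set d. P m}" by (rule Max_in) auto
  then show ?thesis by (auto simp: largest_part_def)
qed

lemma even_largest_even_part: "even (largest_part even d)"
  using largest_part_cases[of even d] by auto

lemma largest_odd_part_cases: "largest_part odd d = 0 \<or> odd (largest_part odd d)"
  using largest_part_cases[of odd d] by auto

lemma less_largest_part_iff: "k < largest_part P d \<longleftrightarrow> (\<exists>m \<in> set d. P m \<and> k < m)"
  using largest_part_cases[of P d] le_largest_part[of _ d P] by (auto intro: less_le_trans)

lemma nonneg_mem_hvals_iff:
  assumes "0 \<le> v"
  shows "v \<in> set (hvals d) \<longleftrightarrow> v < int (largest_part (\<lambda>m. odd (v + int m)) d)"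
proof -
  have "v < int (largest_part (\<lambda>m. odd (v + int m)) d) \<longleftrightarrow>
      nat v < largest_part (\<lambda>m. odd (v + int m)) d" using assms by linarith
  also have "\<dots> \<longleftrightarrow> v \<in> set (hvals d)"
    unfolding less_largest_part_iff set_hvals abs_of_nonneg[OF assms] nat_less_iff[OF assms]
    by (simp add: conj_commute)
  finally show ?thesis ..
qed

lemma nonneg_unit_steps_hvals:
  "{v \<in> unit_steps (set (hvals d)). 0 \<le> v} = {0..<int (min (largest_part odd d) (largest_part even d))}"
proof -
  let ?S = "set (hvals d)" and ?A = "largest_part odd d" and ?B = "largest_part even d"
  have step: "v \<in> ?S \<and> v + 1 \<in> ?S \<longleftrightarrow> v < int (min ?A ?B)" if v: "0 \<le> v" for v
  proof (cases "even v")
    case True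
    then have "v \<in> ?S \<and> v + 1 \<in> ?S \<longleftrightarrow> v < int ?A \<and> v + 1 < int ?B"
      using nonneg_mem_hvals_iff[of v d] nonneg_mem_hvals_iff[of "v + 1" d] v by simp
    moreover have "v + 1 \<noteq> int ?B"
    proof
      assume "v + 1 = int ?B"
      then have "even (v + 1)" by (simp add: even_largest_even_part)
      with True show False by simp
    qed
    ultimately show ?thesis by auto
  next
    case False
    then have "v \<in> ?S \<and> v + 1 \<in> ?S \<longleftrightarrow> v < int ?B \<and> v + 1 < int ?A"
      using nonneg_mem_hvals_iff[of v d] nonneg_mem_hvals_iff[of "v + 1" d] v by simp
    moreover have "v + 1 \<noteq> int ?A"
    proof
      assume eq: "v + 1 = int ?A"
      then have "?A \<noteq> 0" using v by auto
      then have "odd (v + 1)" using eq largest_odd_part_cases[of d] by simp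
      with False show False by simp
    qed
    ultimately show ?thesis by auto
  qed
  show ?thesis
  proof (intro set_eqI)
    fix v
    show "v \<in> {v \<in> unit_steps ?S. 0 \<le> v} \<longleftrightarrow> v \<in> {0..<int (min ?A ?B)}"
      using step[of v] by (cases "0 \<le> v") (auto simp: unit_steps_def)
  qed
qed

section \<open>Simple roots of weight one\<close>

lemma card_unit_descents_hvals:
  "card (unit_descents (hvals d)) = 2 * min (largest_part odd d) (largest_part even d)"
proof -
  have "card (unit_descents (hvals d)) = card (unit_steps (set (hvals d)))"
    using card_unit_descents_conv_unit_steps[OF sorted_hvals, where P = "\<lambda>_. True"] by simp
  also have "\<dots> = 2 * card {v \<in> unit_steps (set (hvals d)). 0 \<le> v}"
    by (rule card_unit_steps_symmetric) (simp_all add: uminus_mem_hvals_iff)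
  finally show ?thesis by (simp add: nonneg_unit_steps_hvals)
qed

definition upper_unit_descents :: "int list \<Rightarrow> nat set" where
  "upper_unit_descents xs = {i \<in> unit_descents xs. Suc i \<le> (length xs - 1) div 2}"

lemma Suc_image_upper_unit_descents:
  "Suc ` upper_unit_descents xs = {i. 1 \<le> i \<and> i \<le> (length xs - 1) div 2 \<and> xs ! (i - 1) - xs ! i = 1}"
proof (intro equalityI subsetI)
  fix i assume "i \<in> {i. 1 \<le> i \<and> i \<le> (length xs - 1) div 2 \<and> xs ! (i - 1) - xs ! i = 1}"
  then have "i - 1 \<in> upper_unit_descents xs" "i = Suc (i - 1)"
    by (auto simp: upper_unit_descents_def unit_descents_def)
  then show "i \<in> Suc ` upper_unit_descents xs" by blast
qed (auto simp: upper_unit_descents_def unit_descents_def)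

lemma card_upper_unit_descents_hvals:
  "card (upper_unit_descents (hvals d)) = min (largest_part odd d) (largest_part even d)"
proof -
  have "upper_unit_descents (hvals d) = {i \<in> unit_descents (hvals d). 0 \<le> hvals d ! Suc i}"
    using upper_half_unit_descent_iff[OF sorted_hvals map_uminus_hvals]
    by (auto simp: upper_unit_descents_def)
  then show ?thesis
    using card_unit_descents_conv_unit_steps[OF sorted_hvals, where P = "\<lambda>v. 0 \<le> v"]
    by (simp add: nonneg_unit_steps_hvals)
qed

lemma wt_below_rank: "1 \<le> i \<Longrightarrow> i < rank T d \<Longrightarrow> wt T d i = hvals d ! (i - 1) - hvals d ! i"
  by (simp add: wt_def hc_def)

lemma Theta1_TA: "Theta1 TA d = Suc ` unit_descents (hvals d)"
proof (intro set_eqI)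
  fix i
  show "i \<in> Theta1 TA d \<longleftrightarrow> i \<in> Suc ` unit_descents (hvals d)"
    by (cases i) (auto simp: Theta1_def wt_def rank_def hc_def unit_descents_def length_hvals)
qed

lemma Theta1_TB:
  assumes "odd (sum_list d)"
  shows "Theta1 TB d = Suc ` upper_unit_descents (hvals d)"
proof (intro set_eqI)
  let ?L = "hvals d"
  define n where "n = (sum_list d - 1) div 2"
  have len: "length ?L = 2 * n + 1" using assms by (simp add: n_def length_hvals)
  have half: "(length ?L - 1) div 2 = n" unfolding len by simp
  have r: "rank TB d = n" by (simp add: rank_def n_def)
  have "?L ! n = 0"
    using nth_antisymmetric_list[OF map_uminus_hvals, of n d] len by simp
  then have last: "wt TB d n = ?L ! (n - 1) - ?L ! n" by (simp add: wt_def hc_def r)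
  fix i
  show "i \<in> Theta1 TB d \<longleftrightarrow> i \<in> Suc ` upper_unit_descents ?L"
    unfolding Suc_image_upper_unit_descents half Theta1_def r
    using last wt_below_rank[of i TB d] r by (cases "i < n") auto
qed

lemma Theta1_TC:
  assumes "even (sum_list d)"
  shows "Theta1 TC d = Suc ` upper_unit_descents (hvals d)"
proof (intro set_eqI)
  let ?L = "hvals d"
  define n where "n = sum_list d div 2"
  have len: "length ?L = 2 * n" using assms by (simp add: n_def length_hvals)
  have half: "(length ?L - 1) div 2 = n - 1" unfolding len by (cases n) simp_all
  have r: "rank TC d = n" by (simp add: rank_def n_def)
  have last: "wt TC d n \<noteq> 1" by (simp add: wt_def r) presburger
  fix i
  show "i \<in> Theta1 TC d \<longleftrightarrow> i \<in> Suc ` upper_unit_descents ?L"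
    unfolding Suc_image_upper_unit_descents half Theta1_def r
    using last wt_below_rank[of i TC d] r by (cases "i < n") auto
qed

lemma Theta1_TD:
  assumes "sum_list d = 2 * n"
  shows "Theta1 TD d = Suc ` upper_unit_descents (hvals d) \<union> {i. i = n \<and> 1 \<le> n \<and> wt TD d n = 1}"
proof (intro set_eqI)
  let ?L = "hvals d"
  have len: "length ?L = 2 * n" using assms by (simp add: length_hvals)
  have half: "(length ?L - 1) div 2 = n - 1" unfolding len by (cases n) simp_all
  have r: "rank TD d = n" using assms by (simp add: rank_def)
  fix i
  show "i \<in> Theta1 TD d \<longleftrightarrow> i \<in> Suc ` upper_unit_descents ?L \<union> {i. i = n \<and> 1 \<le> n \<and> wt TD d n = 1}"
    unfolding Suc_image_upper_unit_descents half Theta1_def r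
    using wt_below_rank[of i TD d] r by (cases "i < n") auto
qed

lemma wt_TD_rank_eq_1_iff:
  assumes "sum_list d = 2 * n" "2 \<le> n"
  shows "wt TD d n = 1 \<longleftrightarrow> hvals d ! (n - 2) = 1 \<and> hvals d ! (n - 1) = 0"
proof -
  have len: "length (hvals d) = 2 * n" using assms by (simp add: length_hvals)
  have r: "rank TD d = n" using assms(1) by (simp add: rank_def)
  have "wt TD d n = hvals d ! (n - 2) + hvals d ! (n - 1)"
    using assms(2) by (simp add: wt_def hc_def r numeral_2_eq_2)
  moreover have "0 \<le> hvals d ! (n - 1)"
    using antisymmetric_list_middle(1)[OF sorted_hvals map_uminus_hvals len] assms by simp
  moreover have "hvals d ! (n - 1) \<le> hvals d ! (n - 2)"
    using sorted_wrt_ge_nth_le[OF sorted_hvals, of "n - 2" "n - 1" d] len assms by simp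
  ultimately show ?thesis by auto
qed

lemma wt_TD_rank_eq_1_iff_parts:
  assumes "sum_list d = 2 * n" "2 \<le> n"
  shows "wt TD d n = 1 \<longleftrightarrow> length (filter odd d) = 2 \<and> largest_part even d \<noteq> 0"
proof -
  have len: "length (hvals d) = 2 * n" using assms by (simp add: length_hvals)
  have "(\<lambda>m. odd (1 + int m)) = even" by auto
  then have "1 \<in> set (hvals d) \<longleftrightarrow> 1 < largest_part even d"
    using nonneg_mem_hvals_iff[of 1 d] by simp
  also have "\<dots> \<longleftrightarrow> largest_part even d \<noteq> 0"
    using even_largest_even_part[of d] by (auto simp: less_Suc_eq_0_disj elim: oddE)
  finally show ?thesis
    using wt_TD_rank_eq_1_iff[OF assms]
      antisymmetric_list_middle_1_0_iff[OF sorted_hvals map_uminus_hvals len assms(2)]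
    by (simp add: count_list_hvals_0)
qed

lemma last_two_in_Theta1_TD:
  assumes "sum_list d = 2 * n" "2 \<le> n" "wt TD d n = 1"
  shows "n - 1 \<in> Theta1 TD d" "n \<in> Theta1 TD d"
proof -
  have r: "rank TD d = n" using assms(1) by (simp add: rank_def)
  have "wt TD d (n - 1) = hvals d ! (n - 2) - hvals d ! (n - 1)"
    using assms(2) by (simp add: wt_def hc_def r numeral_2_eq_2)
  then have "wt TD d (n - 1) = 1" using wt_TD_rank_eq_1_iff[OF assms(1,2)] assms(3) by simp
  then show "n - 1 \<in> Theta1 TD d" "n \<in> Theta1 TD d"
    using assms(2,3) by (auto simp: Theta1_def r)
qed

lemma card_Theta1_TA: "card (Theta1 TA d) = 2 * min (largest_part odd d) (largest_part even d)"
  by (simp add: Theta1_TA card_image card_unit_descents_hvals)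

lemma card_Theta1_TB:
  "odd (sum_list d) \<Longrightarrow> card (Theta1 TB d) = min (largest_part odd d) (largest_part even d)"
  by (simp add: Theta1_TB card_image card_upper_unit_descents_hvals)

lemma card_Theta1_TC:
  "even (sum_list d) \<Longrightarrow> card (Theta1 TC d) = min (largest_part odd d) (largest_part even d)"
  by (simp add: Theta1_TC card_image card_upper_unit_descents_hvals)

lemma card_Theta1_TD:
  assumes "sum_list d = 2 * n" "2 \<le> n"
  shows "card (Theta1 TD d) =
    min (largest_part odd d) (largest_part even d) + (if wt TD d n = 1 then 1 else 0)"
proof -
  have "n \<notin> Suc ` upper_unit_descents (hvals d)"
    using assms by (auto simp: Suc_image_upper_unit_descents length_hvals)
  moreover have "finite (upper_unit_descents (hvals d))"
    by (rule finite_subset[OF _ finite_unit_descents]) (auto simp: upper_unit_descents_def)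
  ultimately show ?thesis
    using assms(2) by (simp add: Theta1_TD[OF assms(1)] card_image card_upper_unit_descents_hvals)
qed

lemma length_filter_odd_parity_split: "parity_split d q \<Longrightarrow> length (filter odd d) = q"
proof -
  assume "parity_split d q"
  then have "{i. i < length d \<and> odd (d ! i)} = {..<q}"
    unfolding parity_split_def by (auto simp: not_less[symmetric])
  then show ?thesis by (simp add: length_filter_conv_card)
qed

lemma even_min_largest_parts_parity_split:
  assumes srt: "sorted_wrt (\<ge>) d" and split: "parity_split d q"
  shows "even (min (largest_part odd d) (largest_part even d))"
proof (cases "q = 0")
  case True
  then have "\<forall>m \<in> set d. even m" using split by (auto simp: parity_split_def in_set_conv_nth)
  then have "largest_part odd d = 0" by (intro le_zero_eq[THEN iffD1] largest_part_le) auto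
  then show ?thesis by simp
next
  case False
  then have d0: "0 < length d" "odd (d ! 0)" using split by (auto simp: parity_split_def)
  have "largest_part even d \<le> d ! 0"
    by (rule largest_part_le) (use sorted_wrt_ge_nth_le[OF srt, of 0] in \<open>auto simp: in_set_conv_nth\<close>)
  also have "d ! 0 \<le> largest_part odd d"
    by (rule le_largest_part[of _ d odd, OF nth_mem[OF d0(1)] d0(2)])
  finally show ?thesis by (simp add: min_absorb2 even_largest_even_part)
qed

lemma odd_min_largest_parts_two_odd_parts:
  assumes srt: "sorted_wrt (\<ge>) d" and two: "{i. i < length d \<and> odd (d ! i)} = {2 * t - 2, 2 * t - 1}"
    and t: "2 \<le> t"
  shows "odd (min (largest_part odd d) (largest_part even d))"
proof -
  have odd_at: "i < length d \<and> odd (d ! i) \<longleftrightarrow> i = 2 * t - 2 \<or> i = 2 * t - 1" for i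
    using two by blast
  have a: "2 * t - 2 < length d" "odd (d ! (2 * t - 2))"
    using odd_at[of "2 * t - 2"] by simp_all
  have b: "even (d ! 0)"
    using odd_at[of 0] a(1) t by auto
  have "largest_part odd d \<le> d ! (2 * t - 2)"
  proof (rule largest_part_le)
    fix m assume "m \<in> set d" "odd m"
    then obtain i where i: "i < length d" "m = d ! i" by (auto simp: in_set_conv_nth)
    then have "2 * t - 2 \<le> i" using odd_at[of i] \<open>odd m\<close> by auto
    then show "m \<le> d ! (2 * t - 2)" using sorted_wrt_ge_nth_le[OF srt _ i(1)] i(2) by simp
  qed
  then have odd_part: "largest_part odd d = d ! (2 * t - 2)"
    using le_largest_part[of _ d odd, OF nth_mem[OF a(1)] a(2)] by simp
  have "d ! (2 * t - 2) \<le> d ! 0"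
    using sorted_wrt_ge_nth_le[OF srt _ a(1)] by simp
  also have "d ! 0 \<le> largest_part even d"
    using a(1) by (intro le_largest_part[of _ d even, OF nth_mem b]) linarith
  finally show ?thesis using odd_part a(2) by (simp add: min_def)
qed

lemma finite_Theta1: "finite (Theta1 T d)"
  by (simp add: Theta1_def)

lemma valid_jordan_type_TD_rank:
  assumes "valid_jordan_type TD d"
  shows "sum_list d = 2 * rank TD d" "3 \<le> rank TD d"
  using assms by (auto simp: valid_jordan_type_def rank_def)

lemma even_card_Theta1_parity_split:
  assumes valid: "valid_jordan_type T d" and split: "parity_split d q" and D: "T = TD \<Longrightarrow> q \<noteq> 2"
  shows "even (card (Theta1 T d))"
proof -
  have srt: "sorted_wrt (\<ge>) d" using valid by (simp add: valid_jordan_type_def)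
  note even_min = even_min_largest_parts_parity_split[OF srt split]
  show ?thesis
  proof (cases T)
    case TA
    then show ?thesis by (simp add: card_Theta1_TA)
  next
    case TB
    then show ?thesis using valid even_min by (simp add: card_Theta1_TB valid_jordan_type_def)
  next
    case TC
    then show ?thesis using valid even_min by (simp add: card_Theta1_TC valid_jordan_type_def)
  next
    case TD
    note N = valid_jordan_type_TD_rank[OF valid[unfolded TD]]
    have "2 \<le> rank TD d" using N(2) by simp
    then have "wt TD d (rank TD d) \<noteq> 1"
      using wt_TD_rank_eq_1_iff_parts[OF N(1)] length_filter_odd_parity_split[OF split] D TD by simp
    then show ?thesis using card_Theta1_TD[OF N(1) \<open>2 \<le> rank TD d\<close>] even_min TD by simp
  qed
qed

lemma Theta1_TD_two_odd_parts:
  assumes valid: "valid_jordan_type TD d" and ne: "non_even TD d"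
    and two: "{i. i < length d \<and> odd (d ! i)} = {2 * t - 2, 2 * t - 1}" and t: "1 \<le> t"
  shows "rank TD d - 1 \<in> Theta1 TD d" "rank TD d \<in> Theta1 TD d"
    "even (card (Theta1 TD d)) \<longleftrightarrow> 2 \<le> t"
proof -
  define n where "n = rank TD d"
  have N: "sum_list d = 2 * n" "2 \<le> n" using valid_jordan_type_TD_rank[OF valid] by (simp_all add: n_def)
  have srt: "sorted_wrt (\<ge>) d" and pos: "\<forall>m \<in> set d. 0 < m"
    using valid by (simp_all add: valid_jordan_type_def)
  have odd_at: "i < length d \<and> odd (d ! i) \<longleftrightarrow> i = 2 * t - 2 \<or> i = 2 * t - 1" for i
    using two by blast
  have "length (filter odd d) = 2" using two t by (simp add: length_filter_conv_card)
  moreover have "largest_part even d \<noteq> 0"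
  proof (cases "t = 1")
    case True
    show ?thesis
    proof
      assume "largest_part even d = 0"
      \<comment> \<open>then no simple root has weight 1, contradicting non-evenness\<close>
      then have "card (Theta1 TD d) = 0"
        using card_Theta1_TD[OF N] wt_TD_rank_eq_1_iff_parts[OF N] by simp
      moreover have "Theta1 TD d \<noteq> {}" using ne by (auto simp: non_even_def Theta1_def)
      ultimately show False by (simp add: finite_Theta1)
    qed
  next
    case False
    have "2 * t - 1 < length d" using odd_at[of "2 * t - 1"] by simp
    then have d0: "0 < length d" by linarith
    then have "even (d ! 0)" "0 < d ! 0" using odd_at[of 0] False t pos by auto
    then show ?thesis using le_largest_part[of _ d even, OF nth_mem[OF d0]] by fastforce
  qed
  ultimately have W: "wt TD d n = 1" using wt_TD_rank_eq_1_iff_parts[OF N] by simp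
  show "rank TD d - 1 \<in> Theta1 TD d" "rank TD d \<in> Theta1 TD d"
    using last_two_in_Theta1_TD[OF N W] by (simp_all add: n_def)
  have card: "card (Theta1 TD d) = min (largest_part odd d) (largest_part even d) + 1"
    using card_Theta1_TD[OF N] W by simp
  show "even (card (Theta1 TD d)) \<longleftrightarrow> 2 \<le> t"
  proof (cases "t = 1")
    case True
    have "1 < length d" using odd_at[of 1] True by simp
    moreover have "odd (d ! i)" if "i < 2" for i
      using odd_at[of i] that True \<open>1 < length d\<close> by auto
    moreover have "even (d ! i)" if "2 \<le> i" "i < length d" for i
      using odd_at[of i] that True by auto
    ultimately have "parity_split d 2" by (simp add: parity_split_def)
    then show ?thesis using even_min_largest_parts_parity_split[OF srt] card True by simp
  next
    case False
    then show ?thesis using odd_min_largest_parts_two_odd_parts[OF srt two] card t by simp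
  qed
qed

theorem lemma3p2:
  fixes T :: ctype and d :: "nat list"
  assumes "valid_jordan_type T d" and "non_even T d"
  shows "((T = TA
           \<or> (T = TB \<and> (\<exists>q. odd q \<and> parity_split d q))
           \<or> (T = TC \<and> (\<exists>q. even q \<and> parity_split d q))
           \<or> (T = TD \<and> (\<exists>q. even q \<and> q \<ge> 4 \<and> parity_split d q)))
          \<longrightarrow> even (card (Theta1 T d)))
       \<and> (\<forall>t \<ge> 1. T = TD \<and> {i. i < length d \<and> odd (d ! i)} = {2 * t - 2, 2 * t - 1} \<longrightarrow>
            (t = 1 \<longrightarrow> rank T d \<in> Theta1 T d \<and> odd (card (Theta1 T d)))
          \<and> (length d = 2 * t \<and> 2 * t \<ge> 4 \<longrightarrow>
               even (card (Theta1 T d)) \<and> rank T d - 1 \<in> Theta1 T d \<and> rank T d \<in> Theta1 T d)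
          \<and> (length d > 2 * t \<and> 2 * t \<ge> 4 \<longrightarrow> even (card (Theta1 T d))))"
proof -
  have two_odd_case: "rank T d - 1 \<in> Theta1 T d \<and> rank T d \<in> Theta1 T d
      \<and> (even (card (Theta1 T d)) \<longleftrightarrow> 2 \<le> t)"
    if "1 \<le> t" "T = TD \<and> {i. i < length d \<and> odd (d ! i)} = {2 * t - 2, 2 * t - 1}" for t
    using Theta1_TD_two_odd_parts[of d t] assms that by simp
  show ?thesis
    apply (intro conjI impI allI)
    subgoal using assms(1)
      by (elim disjE conjE exE) (auto simp: card_Theta1_TA intro: even_card_Theta1_parity_split)
    by (drule (1) two_odd_case, simp)+
qed

end
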